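(* Let $G_1,G_2,H_1,H_2\in SL^+_{sym}(2)$, let $g_i,h_i$ be the largest eigenvalues of $G_i,H_i$, and assume $K^{min}=\sqrt{g_1h_1g_2h_2}$. Then there exist $A,B\in O(2)$ such that $$A^TG_1A=\begin{pmatrix}g_1&0\\0&\frac1{g_1}\end{pmatrix},\quad A^TG_2A=\begin{pmatrix}\frac1{g_2}&0\\0&g_2\end{pmatrix},\quad B^TH_1B=\begin{pmatrix}h_1&0\\0&\frac1{h_1}\end{pmatrix},\quad B^TH_2B=\begin{pmatrix}\frac1{h_2}&0\\0&h_2\end{pmatrix}.$$
   Context: $SL^+_{sym}(2)$: real symmetric positive definite $2\times2$ matrices with determinant $1$; $SL(2)$: real $2\times2$ matrices of determinant $1$; $O(2)$: orthogonal $2\times 2$ matrices; $\lambda_{\max}$: largest eigenvalue. $K^{min}:=\min_{A,B\in SL(2)}\max_{i=1,2}\lambda_{\max}(B^TG_iB)\,\lambda_{\max}(A^TH_iA)$. *)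

theory Defs
  imports "HOL-Analysis.Analysis"
begin

type_synonym mat2 = "real^2^2"

definition SLsym_pos :: "mat2 set" where
  "SLsym_pos = {G. transpose G = G \<and> (\<forall>x::real^2. x \<noteq> 0 \<longrightarrow> x \<bullet> (G *v x) > 0) \<and> det G = 1}"

definition SL2 :: "mat2 set" where
  "SL2 = {A. det A = 1}"

definition lambda_max :: "mat2 \<Rightarrow> real" where
  "lambda_max M = Max {c. \<exists>v::real^2. v \<noteq> 0 \<and> M *v v = c *\<^sub>R v}"

text \<open>K^min, the minimum (taken as infimum) over A, B in SL(2).\<close>
definition Kmin :: "mat2 \<Rightarrow> mat2 \<Rightarrow> mat2 \<Rightarrow> mat2 \<Rightarrow> real" where
  "Kmin G1 G2 H1 H2 = Inf {max (lambda_max (transpose B ** G1 ** B) * lambda_max (transpose A ** H1 ** A))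
                               (lambda_max (transpose B ** G2 ** B) * lambda_max (transpose A ** H2 ** A))
                           | A B. A \<in> SL2 \<and> B \<in> SL2}"

definition diag2 :: "real \<Rightarrow> real \<Rightarrow> mat2" where
  "diag2 a b = (\<chi> i j. if i = j then (if i = 1 then a else b) else 0)"

end

theory Submission
  imports Defs
begin

(* The two pairs (G1, G2) and (H1, H2) decouple.  For one pair we use the mixed determinant
   mixed_det G1 G2 (the polarization of det) and prove
     (a) mixed_det G1 G2 <= g1 g2 + 1/(g1 g2), with equality only if one orthogonal matrix
         sends G1 to diag(g1, 1/g1) and G2 to diag(1/g2, g2);
     (b) some B in SL(2) balances the pair: B^T G1 B and B^T G2 B have equal traces, hence the
         same largest eigenvalue L, and L^2 + 1/L^2 = mixed_det G1 G2.
   Since t + 1/t is increasing on [1, oo), (a) and (b) give L^2 <= g1 g2, with equality only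
   in the diagonal configuration.  Doing the same for (H1, H2) yields an admissible pair with
   K^min <= L M <= sqrt (g1 g2 h1 h2), so both inequalities are equalities. *)

lemma mat2_eq_iff:
  "(M::real^2^2) = N \<longleftrightarrow> M$1$1 = N$1$1 \<and> M$1$2 = N$1$2 \<and> M$2$1 = N$2$1 \<and> M$2$2 = N$2$2"
  by (auto simp: vec_eq_iff forall_2)

lemma vec2_eq_iff: "(x::real^2) = y \<longleftrightarrow> x$1 = y$1 \<and> x$2 = y$2"
  by (auto simp: vec_eq_iff forall_2)

lemma matrix_matrix_mult_2: "((A::real^2^2) ** B)$i$j = A$i$1 * B$1$j + A$i$2 * B$2$j"
  by (simp add: matrix_matrix_mult_def sum_2)

lemma matrix_vector_mult_2: "((A::real^2^2) *v x)$i = A$i$1 * x$1 + A$i$2 * x$2"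
  by (simp add: matrix_vector_mult_def sum_2)

lemma inner_2: "(x::real^2) \<bullet> y = x$1 * y$1 + x$2 * y$2"
  by (simp add: inner_vec_def sum_2)

lemma trace_2: "trace (A::real^2^2) = A$1$1 + A$2$2"
  by (simp add: trace_def sum_2)

lemma transpose_nth: "transpose A $ i $ j = A $ j $ i"
  by (simp add: transpose_def)

lemma mat1_2 [simp]:
  "(mat 1 :: real^2^2)$1$1 = 1" "(mat 1 :: real^2^2)$2$2 = 1"
  "(mat 1 :: real^2^2)$1$2 = 0" "(mat 1 :: real^2^2)$2$1 = 0"
  by (auto simp: mat_def)

lemma diag2_nth [simp]:
  "diag2 a b $1$1 = a" "diag2 a b $2$2 = b" "diag2 a b $1$2 = 0" "diag2 a b $2$1 = 0"
  by (auto simp: diag2_def)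

definition mat2 :: "real \<Rightarrow> real \<Rightarrow> real \<Rightarrow> real \<Rightarrow> real^2^2" where
  "mat2 a b c d = (\<chi> i j. if i = 1 then (if j = 1 then a else b) else (if j = 1 then c else d))"

lemma mat2_nth [simp]:
  "mat2 a b c d $1$1 = a" "mat2 a b c d $1$2 = b" "mat2 a b c d $2$1 = c" "mat2 a b c d $2$2 = d"
  by (auto simp: mat2_def)

definition vec2 :: "real \<Rightarrow> real \<Rightarrow> real^2" where
  "vec2 a b = (\<chi> i. if i = 1 then a else b)"

lemma vec2_nth [simp]: "vec2 a b $1 = a" "vec2 a b $2 = b"
  by (auto simp: vec2_def)

lemmas coords_2 = mat2_eq_iff vec2_eq_iff matrix_matrix_mult_2 matrix_vector_mult_2 inner_2
  trace_2 transpose_nth det_2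

lemma SLsym_pos_coords:
  assumes "S \<in> SLsym_pos"
  shows "S$2$1 = S$1$2" "S$1$1 * S$2$2 - (S$1$2)\<^sup>2 = 1" "S$1$1 > 0" "S$2$2 > 0"
proof -
  have symmetric: "transpose S = S" and pd: "\<And>x. x \<noteq> 0 \<Longrightarrow> x \<bullet> (S *v x) > 0" and "det S = 1"
    using assms unfolding SLsym_pos_def by auto
  show sym_entry: "S$2$1 = S$1$2" using symmetric by (metis transpose_nth)
  show "S$1$1 * S$2$2 - (S$1$2)\<^sup>2 = 1"
    using \<open>det S = 1\<close> sym_entry by (simp add: det_2 power2_eq_square)
  show "S$1$1 > 0" using pd[of "vec2 1 0"] by (simp add: coords_2)
  show "S$2$2 > 0" using pd[of "vec2 0 1"] by (simp add: coords_2)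
qed

(* A symmetric positive definite 2x2 matrix has positive determinant: evaluate the
   quadratic form at (-q, p), which gives p * det M. *)
lemma det_pos_if_pos_def:
  fixes M :: "real^2^2"
  assumes "M$2$1 = M$1$2" and pd: "\<And>x. x \<noteq> 0 \<Longrightarrow> x \<bullet> (M *v x) > 0"
  shows "det M > 0"
proof -
  have "M$1$1 > 0" using pd[of "vec2 1 0"] by (simp add: coords_2)
  moreover have "vec2 (- M$1$2) (M$1$1) \<bullet> (M *v vec2 (- M$1$2) (M$1$1)) = M$1$1 * det M"
    using assms(1) by (simp add: coords_2 algebra_simps)
  moreover have "vec2 (- M$1$2) (M$1$1) \<noteq> 0" using calculation(1) by (simp add: coords_2)
  ultimately show ?thesis using pd zero_less_mult_pos by metis
qed

lemma eigenvalue_quadratic: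
  fixes M :: "real^2^2"
  assumes "v \<noteq> 0" "M *v v = c *\<^sub>R v"
  shows "c\<^sup>2 - trace M * c + det M = 0"
proof -
  have e1: "M$1$1 * v$1 + M$1$2 * v$2 = c * v$1" and e2: "M$2$1 * v$1 + M$2$2 * v$2 = c * v$2"
    using assms(2) by (auto simp: coords_2)
  have "((M$1$1 - c) * (M$2$2 - c) - M$1$2 * M$2$1) * v$1 = 0"
    and "((M$1$1 - c) * (M$2$2 - c) - M$1$2 * M$2$1) * v$2 = 0"
    using e1 e2 by algebra+
  moreover have "v$1 \<noteq> 0 \<or> v$2 \<noteq> 0" using assms(1) by (auto simp: vec2_eq_iff)
  ultimately have "(M$1$1 - c) * (M$2$2 - c) - M$1$2 * M$2$1 = 0" by auto
  then show ?thesis by (simp add: trace_2 det_2 power2_eq_square algebra_simps)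
qed

(* Conversely, every real root of the characteristic polynomial is an eigenvalue:
   one of the columns of the adjugate of c I - M is an eigenvector, unless M = c I. *)
lemma quadratic_root_eigenvalue:
  fixes M :: "real^2^2"
  assumes "c\<^sup>2 - trace M * c + det M = 0"
  shows "\<exists>v. v \<noteq> 0 \<and> M *v v = c *\<^sub>R v"
proof -
  have root: "M$1$2 * M$2$1 = (c - M$1$1) * (c - M$2$2)"
    using assms by (simp add: coords_2 power2_eq_square algebra_simps)
  consider "vec2 (M$1$2) (c - M$1$1) \<noteq> 0" | "vec2 (c - M$2$2) (M$2$1) \<noteq> 0"
    | "M$1$2 = 0 \<and> M$2$1 = 0 \<and> M$1$1 = c \<and> M$2$2 = c"
    by (force simp: vec2_eq_iff)
  then show ?thesis
  proof cases
    case 1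
    then show ?thesis
      using root by (intro exI[of _ "vec2 (M$1$2) (c - M$1$1)"]) (auto simp: coords_2 algebra_simps)
  next
    case 2
    then show ?thesis
      using root by (intro exI[of _ "vec2 (c - M$2$2) (M$2$1)"]) (auto simp: coords_2 algebra_simps)
  next
    case 3
    then show ?thesis by (intro exI[of _ "vec2 1 0"]) (simp add: vec2_eq_iff matrix_vector_mult_2)
  qed
qed

lemma det_SLsym_pos: "S \<in> SLsym_pos \<Longrightarrow> det S = 1"
  by (simp add: SLsym_pos_def)

(* For S in SL+sym(2), trace S ^ 2 - 4 = (p - r)^2 + 4 q^2, so trace S >= 2. *)
lemma trace_SLsym_pos_ge_2:
  assumes "S \<in> SLsym_pos"
  shows "trace S \<ge> 2"
proof -
  note c = SLsym_pos_coords[OF assms]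
  have "(trace S)\<^sup>2 - 2\<^sup>2 = (S$1$1 - S$2$2)\<^sup>2 + 4 * (S$1$2)\<^sup>2"
    using c(2) by (simp add: trace_2 power2_eq_square algebra_simps)
  moreover have "(S$1$1 - S$2$2)\<^sup>2 + 4 * (S$1$2)\<^sup>2 \<ge> 0" by simp
  ultimately have "2\<^sup>2 \<le> (trace S)\<^sup>2" by linarith
  moreover have "trace S \<ge> 0" using c(3,4) by (simp add: trace_2)
  ultimately show ?thesis by (rule power2_le_imp_le)
qed

(* The spectrum of S in SL+sym(2) is {l, 1/l} with l >= 1 the larger root of
   c^2 - trace S * c + 1; hence lambda_max S is an eigenvalue, it is >= 1, and it
   determines the trace: trace S = lambda_max S + 1 / lambda_max S. *)
lemma lambda_max_SLsym_pos:
  assumes S: "S \<in> SLsym_pos"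
  shows "\<exists>v. v \<noteq> 0 \<and> S *v v = lambda_max S *\<^sub>R v"
    and "lambda_max S \<ge> 1"
    and "trace S = lambda_max S + 1 / lambda_max S"
proof -
  define T where "T = trace S"
  have T2: "T \<ge> 2" using trace_SLsym_pos_ge_2[OF S] by (simp add: T_def)
  define l where "l = (T + sqrt (T\<^sup>2 - 4)) / 2"
  have T2_sq: "T\<^sup>2 - 4 \<ge> 0"
  proof -
    have "2\<^sup>2 \<le> T\<^sup>2" using T2 by (intro power_mono) auto
    then show ?thesis by simp
  qed
  have sqrt_nonneg: "sqrt (T\<^sup>2 - 4) \<ge> 0" using T2_sq by simp
  have "T + sqrt (T\<^sup>2 - 4) \<ge> 2" using T2 sqrt_nonneg by linarith
  then have l_ge_1: "l \<ge> 1" unfolding l_def by simp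
  have "2 * l - T = sqrt (T\<^sup>2 - 4)" unfolding l_def by (simp add: field_simps)
  then have "(2 * l - T)\<^sup>2 = T\<^sup>2 - 4" using T2_sq by simp
  then have l_root: "l\<^sup>2 - T * l + 1 = 0" by (simp add: power2_eq_square algebra_simps)
  then have T_l: "T = l + 1 / l" using l_ge_1 by (simp add: power2_eq_square field_simps)
  define E where "E = {c. \<exists>v::real^2. v \<noteq> 0 \<and> S *v v = c *\<^sub>R v}"
  have E_sub: "E \<subseteq> {l, 1 / l}"
  proof
    fix c assume "c \<in> E"
    then obtain v where "v \<noteq> 0" "S *v v = c *\<^sub>R v" unfolding E_def by blast
    then have "c\<^sup>2 - T * c + 1 = 0"
      using eigenvalue_quadratic det_SLsym_pos[OF S] unfolding T_def by metis
    moreover have "(c - l) * (c - 1 / l) = c\<^sup>2 - (l + 1 / l) * c + l * (1 / l)"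
      using l_ge_1 by (simp add: power2_eq_square field_simps)
    ultimately have "(c - l) * (c - 1 / l) = 0" using T_l l_ge_1 by simp
    then show "c \<in> {l, 1 / l}" by auto
  qed
  have l_in_E: "l \<in> E"
    using quadratic_root_eigenvalue[of l S] l_root det_SLsym_pos[OF S] unfolding E_def T_def by simp
  have "lambda_max S = l"
    unfolding lambda_max_def E_def[symmetric]
  proof (rule Max_eqI)
    show "finite E" using E_sub finite_subset by blast
    show "c \<le> l" if "c \<in> E" for c
    proof -
      have "c = l \<or> c = 1 / l" using that E_sub by auto
      moreover have "1 / l \<le> 1" using l_ge_1 by simp
      ultimately show ?thesis using l_ge_1 by linarith
    qed
  qed (fact l_in_E)
  then show "\<exists>v. v \<noteq> 0 \<and> S *v v = lambda_max S *\<^sub>R v"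
    using l_in_E unfolding E_def by simp
  show "lambda_max S \<ge> 1" "trace S = lambda_max S + 1 / lambda_max S"
    using \<open>lambda_max S = l\<close> l_ge_1 T_l unfolding T_def by simp_all
qed

lemma plus_inverse_le_imp_le:
  fixes x y :: real
  assumes "x \<ge> 1" "y \<ge> 1" "x + 1 / x \<le> y + 1 / y"
  shows "x \<le> y"
proof (rule ccontr)
  assume "\<not> x \<le> y"
  then have "x * y > 1" using assms(2) by (smt (verit) mult_le_cancel_left1)
  then have "(x - y) * (1 - 1 / (x * y)) > 0"
    using \<open>\<not> x \<le> y\<close> by (intro mult_pos_pos) (auto simp: field_simps)
  also have "(x - y) * (1 - 1 / (x * y)) = x + 1 / x - (y + 1 / y)"
    using assms(1,2) by (simp add: field_simps)
  finally show False using assms(3) by linarith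
qed

lemma lambda_max_eq_if_trace_eq:
  assumes S: "S \<in> SLsym_pos" and T: "T \<in> SLsym_pos" and "trace S = trace T"
  shows "lambda_max S = lambda_max T"
proof -
  have "lambda_max S + 1 / lambda_max S = lambda_max T + 1 / lambda_max T"
    using lambda_max_SLsym_pos(3)[OF S] lambda_max_SLsym_pos(3)[OF T] assms(3) by simp
  then show ?thesis
    using plus_inverse_le_imp_le lambda_max_SLsym_pos(2)[OF S] lambda_max_SLsym_pos(2)[OF T]
    by (metis order_antisym order_refl)
qed

lemma congruence_SLsym_pos:
  assumes G: "G \<in> SLsym_pos" and B: "\<bar>det B\<bar> = 1"
  shows "transpose B ** G ** B \<in> SLsym_pos"
proof -
  have symmetric: "transpose G = G" and pd: "\<And>x. x \<noteq> 0 \<Longrightarrow> x \<bullet> (G *v x) > 0" and "det G = 1"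
    using G unfolding SLsym_pos_def by auto
  have "transpose (transpose B ** G ** B) = transpose B ** G ** B"
    by (simp add: matrix_transpose_mul symmetric matrix_mul_assoc)
  moreover have "det (transpose B ** G ** B) = 1"
  proof -
    have "det B * det B = 1" using B abs_mult_self_eq[of "det B"] by simp
    then show ?thesis using \<open>det G = 1\<close> by (simp add: det_mul)
  qed
  moreover have "x \<bullet> ((transpose B ** G ** B) *v x) > 0" if "x \<noteq> 0" for x
  proof -
    have "inj ((*v) B)" using B by (intro inj_matrix_vector_mult) (simp add: invertible_det_nz)
    then have "B *v x \<noteq> 0" using that by (metis injD matrix_vector_mult_0_right)
    then have "(B *v x) \<bullet> (G *v (B *v x)) > 0" by (rule pd)
    also have "(B *v x) \<bullet> (G *v (B *v x)) = x \<bullet> ((transpose B ** G ** B) *v x)"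
      by (simp add: inner_2 matrix_vector_mult_2 matrix_matrix_mult_2 transpose_nth algebra_simps)
    finally show ?thesis .
  qed
  ultimately show ?thesis unfolding SLsym_pos_def by auto
qed

lemma orthogonal_matrix_2:
  "orthogonal_matrix (mat2 a (- b) b a) \<longleftrightarrow> a\<^sup>2 + b\<^sup>2 = 1"
  by (auto simp: orthogonal_matrix_def coords_2 power2_eq_square algebra_simps)

(* Spectral theorem in SL+sym(2): rotating a unit eigenvector u of lambda_max S to
   the first basis vector diagonalizes S; the remaining diagonal entry is 1/lambda_max S
   because the determinant is 1. *)
lemma SLsym_pos_diagonalize:
  assumes S: "S \<in> SLsym_pos"
  shows "\<exists>U. orthogonal_matrix U \<and> transpose U ** S ** U = diag2 (lambda_max S) (1 / lambda_max S)"
proof -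
  define g where "g = lambda_max S"
  obtain v where "v \<noteq> 0" and v: "S *v v = g *\<^sub>R v"
    using lambda_max_SLsym_pos(1)[OF S] unfolding g_def by blast
  define u where "u = v /\<^sub>R norm v"
  have u_unit: "(u$1)\<^sup>2 + (u$2)\<^sup>2 = 1"
    using \<open>v \<noteq> 0\<close> inner_2[of u u] unfolding u_def by (simp add: power2_eq_square dot_square_norm)
  have u_eig: "S$1$1 * u$1 + S$1$2 * u$2 = g * u$1" "S$2$1 * u$1 + S$2$2 * u$2 = g * u$2"
    using arg_cong[OF v, of "\<lambda>w. w /\<^sub>R norm v"] unfolding u_def
    by (auto simp: vec2_eq_iff matrix_vector_mult_2 algebra_simps)
  define U where "U = mat2 (u$1) (- u$2) (u$2) (u$1)"
  have U: "orthogonal_matrix U" using u_unit orthogonal_matrix_2 unfolding U_def by blast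
  define D where "D = transpose U ** S ** U"
  have D: "D \<in> SLsym_pos"
    using congruence_SLsym_pos[OF S] det_orthogonal_matrix[OF U] unfolding D_def by auto
  have "D$1$1 = u$1 * (S$1$1 * u$1 + S$1$2 * u$2) + u$2 * (S$2$1 * u$1 + S$2$2 * u$2)"
    unfolding D_def U_def by (simp add: matrix_matrix_mult_2 transpose_nth algebra_simps)
  also have "\<dots> = g * ((u$1)\<^sup>2 + (u$2)\<^sup>2)" using u_eig by (simp add: power2_eq_square algebra_simps)
  finally have D11: "D$1$1 = g" using u_unit by simp
  have "D$2$1 = u$1 * (S$2$1 * u$1 + S$2$2 * u$2) - u$2 * (S$1$1 * u$1 + S$1$2 * u$2)"
    unfolding D_def U_def by (simp add: matrix_matrix_mult_2 transpose_nth algebra_simps)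
  then have D21: "D$2$1 = 0" using u_eig by simp
  then have D12: "D$1$2 = 0" using SLsym_pos_coords(1)[OF D] by simp
  have "det D = 1" using det_SLsym_pos[OF D] .
  moreover have "g \<ge> 1" using lambda_max_SLsym_pos(2)[OF S] unfolding g_def .
  ultimately have "D$2$2 = 1 / g" using D11 D12 D21 by (simp add: det_2 field_simps)
  then have "D = diag2 g (1 / g)" using D11 D12 D21 by (simp add: mat2_eq_iff)
  then show ?thesis using U unfolding D_def g_def by blast
qed

lemma diagonal_swap:
  assumes "orthogonal_matrix U" "transpose U ** S ** U = diag2 a b"
  shows "orthogonal_matrix (U ** mat2 0 1 1 0)"
    and "transpose (U ** mat2 0 1 1 0) ** S ** (U ** mat2 0 1 1 0) = diag2 b a"
proof -
  have "orthogonal_matrix (mat2 0 1 1 0)" by (simp add: orthogonal_matrix_def coords_2)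
  then show "orthogonal_matrix (U ** mat2 0 1 1 0)" by (rule orthogonal_matrix_mul[OF assms(1)])
  have "transpose (U ** mat2 0 1 1 0) ** S ** (U ** mat2 0 1 1 0)
      = transpose (mat2 0 1 1 0) ** (transpose U ** S ** U) ** mat2 0 1 1 0"
    by (simp add: matrix_transpose_mul matrix_mul_assoc)
  then show "transpose (U ** mat2 0 1 1 0) ** S ** (U ** mat2 0 1 1 0) = diag2 b a"
    using assms(2) by (simp add: coords_2)
qed

(* The mixed determinant, the symmetric bilinear form polarizing det:
   det (G + H) = det G + det H + mixed_det G H.  Equivalently mixed_det G H is the
   trace of G times the adjugate of H. *)
definition mixed_det :: "mat2 \<Rightarrow> mat2 \<Rightarrow> real" where
  "mixed_det G H = G$1$1 * H$2$2 + G$2$2 * H$1$1 - G$1$2 * H$2$1 - G$2$1 * H$1$2"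

lemma det_add_2: "det (G + H) = det G + det H + mixed_det G H"
  by (simp add: det_2 mixed_det_def algebra_simps)

lemma mixed_det_congruence:
  "mixed_det (transpose B ** G ** B) (transpose B ** H ** B) = (det B)\<^sup>2 * mixed_det G H"
proof -
  have mixed: "mixed_det X Y = det (X + Y) - det X - det Y" for X Y
    using det_add_2[of X Y] by simp
  have det_cong: "det (transpose B ** X ** B) = (det B)\<^sup>2 * det X" for X
    by (simp add: det_mul power2_eq_square)
  have "transpose B ** G ** B + transpose B ** H ** B = transpose B ** (G + H) ** B"
    by (simp add: mat2_eq_iff matrix_matrix_mult_2 algebra_simps)
  then show ?thesis unfolding mixed by (simp add: det_cong algebra_simps)
qed

lemma mixed_det_diag2: "mixed_det (diag2 a b) H = a * H$2$2 + b * H$1$1"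
  by (simp add: mixed_det_def)

lemma trace_congruence:
  fixes B G :: "'a::comm_semiring_1^'n^'n"
  shows "trace (transpose B ** G ** B) = trace (G ** (B ** transpose B))"
proof -
  have "trace (transpose B ** G ** B) = trace (B ** (transpose B ** G))"
    by (rule trace_mul_sym[of "transpose B ** G" B])
  also have "\<dots> = trace ((B ** transpose B) ** G)" by (simp only: matrix_mul_assoc)
  also have "\<dots> = trace (G ** (B ** transpose B))"
    by (rule trace_mul_sym[of "B ** transpose B" G])
  finally show ?thesis .
qed

lemma trace_orthogonal_congruence:
  fixes U G :: "real^'n^'n"
  shows "orthogonal_matrix U \<Longrightarrow> trace (transpose U ** G ** U) = trace G"
  unfolding orthogonal_matrix_def trace_congruence by simp

(* A diagonal entry r of H in SL+sym(2) satisfies (r - h)(r - 1/h) = -q^2, where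
   h = lambda_max H; so it lies between 1/h and h, with r = h only if H is diagonal. *)
lemma SLsym_pos_diagonal_entry:
  assumes H: "H \<in> SLsym_pos"
  shows "(H$2$2 - lambda_max H) * (H$2$2 - 1 / lambda_max H) = - (H$1$2)\<^sup>2"
proof -
  define h k where "h = lambda_max H" and "k = 1 / lambda_max H"
  have "h * k = 1" using lambda_max_SLsym_pos(2)[OF H] unfolding h_def k_def by simp
  moreover have "H$1$1 + H$2$2 = h + k"
    using lambda_max_SLsym_pos(3)[OF H] unfolding h_def k_def by (simp add: trace_2)
  moreover note SLsym_pos_coords(2)[OF H]
  ultimately have "(H$2$2 - h) * (H$2$2 - k) = - (H$1$2)\<^sup>2" by algebra
  then show ?thesis unfolding h_def k_def .
qed

(* After rotating G to diag(g, 1/g), the mixed determinant of G and H becomes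
   g r + p / g for the diagonal entries p, r of the rotated H; rewritten via p + r = h + 1/h. *)
lemma mixed_det_normal_form:
  assumes G: "G \<in> SLsym_pos" and H: "H \<in> SLsym_pos"
  defines "g \<equiv> lambda_max G" and "h \<equiv> lambda_max H"
  obtains U where "orthogonal_matrix U" "transpose U ** G ** U = diag2 g (1 / g)"
    "transpose U ** H ** U \<in> SLsym_pos" "lambda_max (transpose U ** H ** U) = h"
    "mixed_det G H = g * h + 1 / (g * h) - (g - 1 / g) * (h - (transpose U ** H ** U)$2$2)"
proof -
  obtain U where U: "orthogonal_matrix U" and UG: "transpose U ** G ** U = diag2 g (1 / g)"
    using SLsym_pos_diagonalize[OF G] unfolding g_def by blast
  define H_rot where "H_rot = transpose U ** H ** U"
  have det_U: "(det U)\<^sup>2 = 1" using det_orthogonal_matrix[OF U] by auto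
  have H_rot: "H_rot \<in> SLsym_pos"
    using congruence_SLsym_pos[OF H] det_orthogonal_matrix[OF U] unfolding H_rot_def by auto
  have h_rot: "lambda_max H_rot = h"
    using lambda_max_eq_if_trace_eq[OF H_rot H] trace_orthogonal_congruence[OF U]
    unfolding H_rot_def h_def by simp
  have "g \<ge> 1" "h \<ge> 1"
    using lambda_max_SLsym_pos(2)[OF G] lambda_max_SLsym_pos(2)[OF H] unfolding g_def h_def by auto
  have "H_rot$1$1 = h + 1 / h - H_rot$2$2"
    using lambda_max_SLsym_pos(3)[OF H_rot] h_rot by (simp add: trace_2)
  moreover have "mixed_det G H = g * H_rot$2$2 + 1 / g * H_rot$1$1"
    using mixed_det_congruence[of U G H] det_U UG unfolding H_rot_def by (simp add: mixed_det_diag2)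
  ultimately have "mixed_det G H = g * H_rot$2$2 + (h + 1 / h - H_rot$2$2) / g" by simp
  also have "\<dots> = g * h + 1 / (g * h) - (g - 1 / g) * (h - H_rot$2$2)"
    using \<open>g \<ge> 1\<close> \<open>h \<ge> 1\<close> by (simp add: field_simps)
  finally have "mixed_det G H = g * h + 1 / (g * h) - (g - 1 / g) * (h - H_rot$2$2)" .
  then show ?thesis using that U UG H_rot h_rot unfolding H_rot_def by blast
qed

(* Upper bound: mixed_det G H <= g h + 1/(g h), since r <= h and g >= 1/g. *)
lemma mixed_det_le:
  assumes G: "G \<in> SLsym_pos" and H: "H \<in> SLsym_pos"
  shows "mixed_det G H \<le> lambda_max G * lambda_max H + 1 / (lambda_max G * lambda_max H)"
proof -
  obtain U where H_rot: "transpose U ** H ** U \<in> SLsym_pos"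
    and h_rot: "lambda_max (transpose U ** H ** U) = lambda_max H"
    and m: "mixed_det G H = lambda_max G * lambda_max H + 1 / (lambda_max G * lambda_max H)
      - (lambda_max G - 1 / lambda_max G) * (lambda_max H - (transpose U ** H ** U)$2$2)"
    using mixed_det_normal_form[OF G H] by metis
  define r where "r = (transpose U ** H ** U)$2$2"
  have "r \<le> lambda_max H"
  proof (rule ccontr)
    assume "\<not> r \<le> lambda_max H"
    moreover have "1 / lambda_max H \<le> lambda_max H"
      using lambda_max_SLsym_pos(2)[OF H] by (smt (verit) divide_le_eq_1)
    ultimately have "(r - lambda_max H) * (r - 1 / lambda_max H) > 0" by simp
    then show False using SLsym_pos_diagonal_entry[OF H_rot] h_rot unfolding r_def
      by (smt (verit) zero_le_power2)
  qed
  moreover have "lambda_max G - 1 / lambda_max G \<ge> 0"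
    using lambda_max_SLsym_pos(2)[OF G] by (smt (verit) divide_le_eq_1)
  ultimately show ?thesis using m unfolding r_def by simp
qed

(* If some orthogonal congruence turns G into the identity, then G = I and so does
   every orthogonal congruence. *)
lemma orthogonal_congruence_identity:
  assumes "orthogonal_matrix U" "orthogonal_matrix A" "transpose U ** G ** U = mat 1"
  shows "transpose A ** G ** A = mat 1"
proof -
  have "U ** (transpose U ** G ** U) ** transpose U = (U ** transpose U) ** G ** (U ** transpose U)"
    by (simp only: matrix_mul_assoc)
  then have "G = mat 1" using assms(1,3) by (simp add: orthogonal_matrix_def)
  then show ?thesis using assms(2) by (simp add: orthogonal_matrix_def)
qed

definition simultaneously_diagonal :: "mat2 \<Rightarrow> mat2 \<Rightarrow> mat2 \<Rightarrow> bool" where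
  "simultaneously_diagonal A G H \<longleftrightarrow> orthogonal_matrix A \<and>
     transpose A ** G ** A = diag2 (lambda_max G) (1 / lambda_max G) \<and>
     transpose A ** H ** A = diag2 (1 / lambda_max H) (lambda_max H)"

(* Equality case: if the bound is attained, G and H are simultaneously diagonal.  Either
   g = 1 (so G = I and we diagonalize H in swapped order) or the rotated H has r = h,
   hence is diag(1/h, h). *)
lemma mixed_det_eq_imp_simultaneous_diag:
  assumes G: "G \<in> SLsym_pos" and H: "H \<in> SLsym_pos"
  defines "g \<equiv> lambda_max G" and "h \<equiv> lambda_max H"
  assumes eq: "mixed_det G H = g * h + 1 / (g * h)"
  shows "\<exists>A. simultaneously_diagonal A G H"
proof -
  obtain U where U: "orthogonal_matrix U" and UG: "transpose U ** G ** U = diag2 g (1 / g)"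
    and H_rot: "transpose U ** H ** U \<in> SLsym_pos"
    and h_rot: "lambda_max (transpose U ** H ** U) = h"
    and m: "mixed_det G H = g * h + 1 / (g * h) - (g - 1 / g) * (h - (transpose U ** H ** U)$2$2)"
    using mixed_det_normal_form[OF G H] unfolding g_def h_def by metis
  define r where "r = (transpose U ** H ** U)$2$2"
  have "g \<ge> 1" using lambda_max_SLsym_pos(2)[OF G] unfolding g_def .
  have "(g - 1 / g) * (h - r) = 0" using m eq unfolding r_def by simp
  moreover have "g = 1" if "g - 1 / g = 0"
  proof -
    have "g * g = 1" using that \<open>g \<ge> 1\<close> by (simp add: field_simps)
    moreover have "g * 1 \<le> g * g" using \<open>g \<ge> 1\<close> by (intro mult_left_mono) auto
    ultimately show ?thesis using \<open>g \<ge> 1\<close> by simp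
  qed
  ultimately consider "g = 1" | "r = h" by force
  then show ?thesis
  proof cases
    case 1
    obtain V where V: "orthogonal_matrix V" "transpose V ** H ** V = diag2 h (1 / h)"
      using SLsym_pos_diagonalize[OF H] unfolding h_def by blast
    have "transpose U ** G ** U = mat 1" using UG 1 by (simp add: mat2_eq_iff)
    then have "transpose (V ** mat2 0 1 1 0) ** G ** (V ** mat2 0 1 1 0) = diag2 g (1 / g)"
      using orthogonal_congruence_identity[OF U diagonal_swap(1)[OF V]] 1 by (simp add: mat2_eq_iff)
    then show ?thesis
      using diagonal_swap[OF V] unfolding simultaneously_diagonal_def g_def h_def by blast
  next
    case 2
    have "((transpose U ** H ** U)$1$2)\<^sup>2 = 0"
      using SLsym_pos_diagonal_entry[OF H_rot] h_rot 2 unfolding r_def by simp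
    moreover have "(transpose U ** H ** U)$1$1 + r = h + 1 / h"
      using lambda_max_SLsym_pos(3)[OF H_rot] h_rot unfolding r_def by (simp add: trace_2)
    ultimately have "transpose U ** H ** U = diag2 (1 / h) h"
      using 2 SLsym_pos_coords(1)[OF H_rot] unfolding r_def by (simp add: mat2_eq_iff)
    then show ?thesis using U UG unfolding simultaneously_diagonal_def g_def h_def by blast
  qed
qed

lemma cholesky_2:
  assumes "P$2$1 = P$1$2" "P$1$1 > 0" "det P = 1"
  shows "\<exists>B \<in> SL2. B ** transpose B = P"
proof -
  define a where "a = sqrt (P$1$1)"
  have "a > 0" "a * a = P$1$1" using assms(2) unfolding a_def by simp_all
  define B where "B = mat2 a 0 (P$1$2 / a) (1 / a)"
  have "B \<in> SL2" using \<open>a > 0\<close> unfolding B_def SL2_def by (simp add: det_2)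
  moreover have "B ** transpose B = P"
    using \<open>a > 0\<close> \<open>a * a = P$1$1\<close> assms unfolding B_def
    by (simp add: mat2_eq_iff matrix_matrix_mult_2 transpose_nth det_2 field_simps)
  ultimately show ?thesis by blast
qed

(* G1 + G2 is again symmetric positive definite, so its determinant is positive. *)
lemma det_add_SLsym_pos:
  assumes G1: "G1 \<in> SLsym_pos" and G2: "G2 \<in> SLsym_pos"
  shows "det (G1 + G2) > 0"
proof (rule det_pos_if_pos_def)
  show "(G1 + G2)$2$1 = (G1 + G2)$1$2"
    using SLsym_pos_coords(1)[OF G1] SLsym_pos_coords(1)[OF G2] by simp
  show "x \<bullet> ((G1 + G2) *v x) > 0" if "x \<noteq> 0" for x
    using G1 G2 that unfolding SLsym_pos_def
    by (simp add: matrix_vector_mult_add_rdistrib inner_add_right add_pos_pos)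
qed

(* Balancing: with M = G1 + G2 and s = sqrt (det M), factor P = adj M / s = B B^T.
   Then trace (B^T Gi B) = trace (Gi P) = mixed_det Gi M / s = det M / s = s for i = 1, 2. *)
lemma balancing_congruence:
  assumes G1: "G1 \<in> SLsym_pos" and G2: "G2 \<in> SLsym_pos"
  defines "s \<equiv> sqrt (det (G1 + G2))"
  shows "\<exists>B \<in> SL2. trace (transpose B ** G1 ** B) = s \<and> trace (transpose B ** G2 ** B) = s"
proof -
  define M where "M = G1 + G2"
  have M_sym: "M$2$1 = M$1$2"
    using SLsym_pos_coords(1)[OF G1] SLsym_pos_coords(1)[OF G2] unfolding M_def by simp
  have "det M > 0" using det_add_SLsym_pos[OF G1 G2] unfolding M_def .
  then have "s > 0" "s * s = det M" unfolding s_def M_def by simp_all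
  define P where "P = mat2 (M$2$2 / s) (- M$1$2 / s) (- M$2$1 / s) (M$1$1 / s)"
  have "M$2$2 > 0"
    using SLsym_pos_coords(4)[OF G1] SLsym_pos_coords(4)[OF G2] unfolding M_def by simp
  then have "P$1$1 > 0" using \<open>s > 0\<close> unfolding P_def by simp
  moreover have "det P = 1"
    using \<open>s > 0\<close> \<open>s * s = det M\<close> unfolding P_def by (simp add: det_2 field_simps)
  ultimately obtain B where B: "B \<in> SL2" and BP: "B ** transpose B = P"
    using cholesky_2[of P] M_sym unfolding P_def by auto
  have trace_P: "trace (G ** P) = mixed_det G M / s" for G
    using \<open>s > 0\<close> unfolding P_def
    by (simp add: trace_2 matrix_matrix_mult_2 mixed_det_def field_simps)
  have "mixed_det G1 M = det M" "mixed_det G2 M = det M"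
    using det_add_2[of G1 G2] det_SLsym_pos[OF G1] det_SLsym_pos[OF G2]
      SLsym_pos_coords(1)[OF G1] SLsym_pos_coords(1)[OF G2]
    unfolding M_def by (simp_all add: mixed_det_def det_2 algebra_simps)
  moreover have "det M / s = s" using \<open>s > 0\<close> \<open>s * s = det M\<close> by (simp add: field_simps)
  ultimately have "trace (transpose B ** G1 ** B) = s" "trace (transpose B ** G2 ** B) = s"
    by (simp_all add: trace_congruence BP trace_P)
  then show ?thesis using B by blast
qed

(* Hence B^T G1 B and B^T G2 B share the largest eigenvalue L, and
   L^2 + 1/L^2 = (L + 1/L)^2 - 2 = det (G1 + G2) - 2 = mixed_det G1 G2. *)
lemma balanced_congruence:
  assumes G1: "G1 \<in> SLsym_pos" and G2: "G2 \<in> SLsym_pos"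
  shows "\<exists>B \<in> SL2. lambda_max (transpose B ** G1 ** B) = lambda_max (transpose B ** G2 ** B) \<and>
    (lambda_max (transpose B ** G1 ** B))\<^sup>2 + 1 / (lambda_max (transpose B ** G1 ** B))\<^sup>2
      = mixed_det G1 G2"
proof -
  define s where "s = sqrt (det (G1 + G2))"
  obtain B where B: "B \<in> SL2" and tr1: "trace (transpose B ** G1 ** B) = s"
    and tr2: "trace (transpose B ** G2 ** B) = s"
    using balancing_congruence[OF G1 G2] unfolding s_def by blast
  have "\<bar>det B\<bar> = 1" using B unfolding SL2_def by simp
  then have T1: "transpose B ** G1 ** B \<in> SLsym_pos" and T2: "transpose B ** G2 ** B \<in> SLsym_pos"
    using congruence_SLsym_pos G1 G2 by blast+
  define L where "L = lambda_max (transpose B ** G1 ** B)"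
  have "L \<ge> 1" and "L + 1 / L = s"
    using lambda_max_SLsym_pos(2,3)[OF T1] tr1 unfolding L_def by simp_all
  moreover have "(L + 1 / L)\<^sup>2 = L\<^sup>2 + 1 / L\<^sup>2 + 2"
    using \<open>L \<ge> 1\<close> by (simp add: power2_eq_square field_simps)
  ultimately have "L\<^sup>2 + 1 / L\<^sup>2 = s\<^sup>2 - 2" by simp
  also have "s\<^sup>2 - 2 = mixed_det G1 G2"
    using det_add_SLsym_pos[OF G1 G2] det_add_2[of G1 G2] det_SLsym_pos[OF G1] det_SLsym_pos[OF G2]
    unfolding s_def by simp
  finally show ?thesis
    using B lambda_max_eq_if_trace_eq[OF T1 T2] tr1 tr2 unfolding L_def by auto
qed

lemma lambda_max_mult_ge_1:
  assumes "S \<in> SLsym_pos" "T \<in> SLsym_pos"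
  shows "lambda_max S * lambda_max T \<ge> 1"
  using lambda_max_SLsym_pos(2)[OF assms(1)] lambda_max_SLsym_pos(2)[OF assms(2)]
  by (metis mult_mono' mult_1_left zero_le_one)

lemma pair_bound:
  assumes G1: "G1 \<in> SLsym_pos" and G2: "G2 \<in> SLsym_pos"
  defines "g1 \<equiv> lambda_max G1" and "g2 \<equiv> lambda_max G2"
  obtains B L where "B \<in> SL2"
    "lambda_max (transpose B ** G1 ** B) = L" "lambda_max (transpose B ** G2 ** B) = L"
    "L\<^sup>2 \<le> g1 * g2" "L\<^sup>2 = g1 * g2 \<Longrightarrow> \<exists>A. simultaneously_diagonal A G1 G2"
proof -
  obtain B where B: "B \<in> SL2"
    and L_eq: "lambda_max (transpose B ** G1 ** B) = lambda_max (transpose B ** G2 ** B)"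
    and L_mixed: "(lambda_max (transpose B ** G1 ** B))\<^sup>2 + 1 / (lambda_max (transpose B ** G1 ** B))\<^sup>2
      = mixed_det G1 G2"
    using balanced_congruence[OF G1 G2] by blast
  define L where "L = lambda_max (transpose B ** G1 ** B)"
  have "\<bar>det B\<bar> = 1" using B unfolding SL2_def by simp
  then have "L \<ge> 1"
    using lambda_max_SLsym_pos(2) congruence_SLsym_pos[OF G1] unfolding L_def by blast
  have "L\<^sup>2 \<ge> 1" using \<open>L \<ge> 1\<close> by (simp add: one_le_power)
  moreover have "g1 * g2 \<ge> 1" using lambda_max_mult_ge_1[OF G1 G2] unfolding g1_def g2_def .
  moreover have "L\<^sup>2 + 1 / L\<^sup>2 \<le> g1 * g2 + 1 / (g1 * g2)"
    using L_mixed mixed_det_le[OF G1 G2] unfolding L_def g1_def g2_def by simp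
  ultimately have "L\<^sup>2 \<le> g1 * g2" by (rule plus_inverse_le_imp_le)
  moreover have "\<exists>A. simultaneously_diagonal A G1 G2" if "L\<^sup>2 = g1 * g2"
    using mixed_det_eq_imp_simultaneous_diag[OF G1 G2] L_mixed that
    unfolding L_def g1_def g2_def by simp
  ultimately show ?thesis using that B L_eq unfolding L_def by simp
qed

(* Kmin is a lower bound for every admissible value; the set of values is bounded below
   by 0 because all largest eigenvalues involved are at least 1. *)
lemma Kmin_le:
  assumes "G1 \<in> SLsym_pos" "H1 \<in> SLsym_pos" "A \<in> SL2" "B \<in> SL2"
  shows "Kmin G1 G2 H1 H2 \<le> max (lambda_max (transpose B ** G1 ** B) * lambda_max (transpose A ** H1 ** A))
    (lambda_max (transpose B ** G2 ** B) * lambda_max (transpose A ** H2 ** A))"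
proof -
  define K_value where "K_value A B = max (lambda_max (transpose B ** G1 ** B) * lambda_max (transpose A ** H1 ** A))
    (lambda_max (transpose B ** G2 ** B) * lambda_max (transpose A ** H2 ** A))" for A B
  have "K_value A' B' \<ge> 0" if "A' \<in> SL2" "B' \<in> SL2" for A' B'
  proof -
    have "\<bar>det A'\<bar> = 1" "\<bar>det B'\<bar> = 1" using that unfolding SL2_def by simp_all
    then have "lambda_max (transpose B' ** G1 ** B') \<ge> 1" "lambda_max (transpose A' ** H1 ** A') \<ge> 1"
      using lambda_max_SLsym_pos(2) congruence_SLsym_pos assms(1,2) by blast+
    then show ?thesis unfolding K_value_def by (simp add: le_max_iff_disj)
  qed
  then have "bdd_below {K_value A B | A B. A \<in> SL2 \<and> B \<in> SL2}"
    by (intro bdd_belowI[of _ 0]) blast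
  moreover have "K_value A B \<in> {K_value A B | A B. A \<in> SL2 \<and> B \<in> SL2}"
    using assms(3,4) by blast
  ultimately have "Inf {K_value A B | A B. A \<in> SL2 \<and> B \<in> SL2} \<le> K_value A B"
    by (simp add: cInf_lower)
  then show ?thesis unfolding Kmin_def K_value_def .
qed

lemma sqrt_product_squeeze:
  fixes L M X Y :: real
  assumes "L\<^sup>2 \<le> X" "M\<^sup>2 \<le> Y" "X > 0" "Y > 0" "sqrt (X * Y) \<le> L * M"
  shows "L\<^sup>2 = X" "M\<^sup>2 = Y"
proof -
  have "(sqrt (X * Y))\<^sup>2 \<le> (L * M)\<^sup>2"
    using assms(5) by (rule power_mono) (simp add: assms(3,4) less_imp_le)
  moreover have "(sqrt (X * Y))\<^sup>2 = X * Y" using assms(3,4) by (simp add: less_imp_le)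
  ultimately have "X * Y \<le> (L * M)\<^sup>2" by simp
  then have XY: "X * Y \<le> L\<^sup>2 * M\<^sup>2" by (simp add: power_mult_distrib)
  have "L\<^sup>2 * M\<^sup>2 \<le> X * M\<^sup>2" "X * M\<^sup>2 \<le> X * Y" "L\<^sup>2 * M\<^sup>2 \<le> L\<^sup>2 * Y" "L\<^sup>2 * Y \<le> X * Y"
    using assms(1-4) by (simp_all add: mult_right_mono mult_left_mono)
  then have "X * M\<^sup>2 = X * Y" "L\<^sup>2 * Y = X * Y" using XY by linarith+
  then show "L\<^sup>2 = X" "M\<^sup>2 = Y" using assms(3,4) by simp_all
qed

(* The pair bounds give A, B in SL(2) with K^min <= L M where
   L^2 <= g1 g2 and M^2 <= h1 h2; the hypothesis K^min = sqrt (g1 h1 g2 h2) squeezes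
   both into equalities, and the equality cases provide the orthogonal matrices. *)
theorem mainTheorem8:
  fixes G1 G2 H1 H2 :: "real^2^2"
  assumes "G1 \<in> SLsym_pos" "G2 \<in> SLsym_pos" "H1 \<in> SLsym_pos" "H2 \<in> SLsym_pos"
  assumes "Kmin G1 G2 H1 H2 =
     sqrt (lambda_max G1 * lambda_max H1 * lambda_max G2 * lambda_max H2)"
  shows "\<exists>A B :: real^2^2. orthogonal_matrix A \<and> orthogonal_matrix B \<and>
     transpose A ** G1 ** A = diag2 (lambda_max G1) (1 / lambda_max G1) \<and>
     transpose A ** G2 ** A = diag2 (1 / lambda_max G2) (lambda_max G2) \<and>
     transpose B ** H1 ** B = diag2 (lambda_max H1) (1 / lambda_max H1) \<and>
     transpose B ** H2 ** B = diag2 (1 / lambda_max H2) (lambda_max H2)"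
proof -
  obtain B L where B: "B \<in> SL2" "lambda_max (transpose B ** G1 ** B) = L"
      "lambda_max (transpose B ** G2 ** B) = L" "L\<^sup>2 \<le> lambda_max G1 * lambda_max G2"
    and diag_G: "L\<^sup>2 = lambda_max G1 * lambda_max G2 \<Longrightarrow> \<exists>A. simultaneously_diagonal A G1 G2"
    using pair_bound[OF assms(1,2)] by blast
  obtain A M where A: "A \<in> SL2" "lambda_max (transpose A ** H1 ** A) = M"
      "lambda_max (transpose A ** H2 ** A) = M" "M\<^sup>2 \<le> lambda_max H1 * lambda_max H2"
    and diag_H: "M\<^sup>2 = lambda_max H1 * lambda_max H2 \<Longrightarrow> \<exists>B. simultaneously_diagonal B H1 H2"
    using pair_bound[OF assms(3,4)] by blast
  have "sqrt ((lambda_max G1 * lambda_max G2) * (lambda_max H1 * lambda_max H2)) \<le> L * M"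
    using Kmin_le[OF assms(1,3) A(1) B(1), of G2 H2] assms(5) A(2,3) B(2,3) by (simp add: mult_ac)
  moreover have "lambda_max G1 * lambda_max G2 > 0" "lambda_max H1 * lambda_max H2 > 0"
    using lambda_max_mult_ge_1[OF assms(1,2)] lambda_max_mult_ge_1[OF assms(3,4)] by linarith+
  ultimately have "L\<^sup>2 = lambda_max G1 * lambda_max G2" "M\<^sup>2 = lambda_max H1 * lambda_max H2"
    using sqrt_product_squeeze[of L _ M] A(4) B(4) by simp_all
  then show ?thesis using diag_G diag_H unfolding simultaneously_diagonal_def by blast
qed

end
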